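(* Let $X_n=(\mathbb{C}^n,\|\cdot\|)$ be a Banach lattice and $J\subset\mathbb{N}_0^n$ a finite index set. Then $\boldsymbol{\lambda}\big(\mathcal{P}_J(X_n)\big)\le\widehat{\boldsymbol{\lambda}}\big(\mathcal{P}_J(X_n)\big)$.
   Context: A Banach lattice $X_n=(\mathbb{C}^n,\|\cdot\|)$ is a norm with $\|z\|\le\|w\|$ whenever $|z_k|\le|w_k|$ for all $k$. $\mathcal{P}_J(X_n)$ is the space of polynomials $\sum_{\alpha\in J}c_\alpha z^\alpha$ with norm $\sup_{z\in B_{X_n}}|P(z)|$, $B_{X_n}$ the open unit ball. $\boldsymbol{\lambda}(E)$ is the projection constant: supremum over Banach spaces $Y$ and isometric embeddings $I:E\to Y$ of the infimum of norms of projections from $Y$ onto $I(E)$. $c_{X_n}(\alpha)=1/\sup_{z\in B_{X_n}}|z^\alpha|$ and $\widehat{\boldsymbol{\lambda}}(\mathcal{P}_J(X_n))=\sup_{z\in B_{X_n}}\sum_{\alpha\in J}c_{X_n}(\alpha)|z^\alpha|$. *)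

theory Defs
  imports "HOL-Analysis.Analysis"
begin

text \<open>The space C^n is modelled as functions 'n => complex for a finite index type 'n
  (so n = CARD('n)); multi-indices alpha in N_0^n are functions 'n => nat.\<close>

definition mono_pow :: "('n::finite \<Rightarrow> complex) \<Rightarrow> ('n \<Rightarrow> nat) \<Rightarrow> complex" where
  "mono_pow z \<alpha> = (\<Prod>i\<in>UNIV. z i ^ \<alpha> i)"

text \<open>A Banach lattice norm on C^n (completeness is automatic in finite dimension).\<close>
definition is_lattice_norm :: "(('n::finite \<Rightarrow> complex) \<Rightarrow> real) \<Rightarrow> bool" where
  "is_lattice_norm N \<longleftrightarrow>
     (\<forall>z. N z = 0 \<longleftrightarrow> z = (\<lambda>_. 0)) \<and>
     (\<forall>c z. N (\<lambda>i. c * z i) = cmod c * N z) \<and>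
     (\<forall>z w. N (\<lambda>i. z i + w i) \<le> N z + N w) \<and>
     (\<forall>z w. (\<forall>k. cmod (z k) \<le> cmod (w k)) \<longrightarrow> N z \<le> N w)"

definition unit_ball :: "(('n::finite \<Rightarrow> complex) \<Rightarrow> real) \<Rightarrow> ('n \<Rightarrow> complex) set" where
  "unit_ball N = {z. N z < 1}"

text \<open>Polynomials in P_J(X_n), represented by coefficient functions supported in J.\<close>
definition PJ :: "('n \<Rightarrow> nat) set \<Rightarrow> (('n \<Rightarrow> nat) \<Rightarrow> complex) set" where
  "PJ J = {c. \<forall>\<alpha>. \<alpha> \<notin> J \<longrightarrow> c \<alpha> = 0}"

definition poly_norm ::
  "(('n::finite \<Rightarrow> complex) \<Rightarrow> real) \<Rightarrow> ('n \<Rightarrow> nat) set \<Rightarrow> (('n \<Rightarrow> nat) \<Rightarrow> complex) \<Rightarrow> real" where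
  "poly_norm N J c = (SUP z\<in>unit_ball N. cmod (\<Sum>\<alpha>\<in>J. c \<alpha> * mono_pow z \<alpha>))"

definition cX :: "(('n::finite \<Rightarrow> complex) \<Rightarrow> real) \<Rightarrow> ('n \<Rightarrow> nat) \<Rightarrow> real" where
  "cX N \<alpha> = 1 / (SUP z\<in>unit_ball N. cmod (mono_pow z \<alpha>))"

definition lambda_hat :: "(('n::finite \<Rightarrow> complex) \<Rightarrow> real) \<Rightarrow> ('n \<Rightarrow> nat) set \<Rightarrow> real" where
  "lambda_hat N J = (SUP z\<in>unit_ball N. \<Sum>\<alpha>\<in>J. cX N \<alpha> * cmod (mono_pow z \<alpha>))"

text \<open>A complex Banach space: a real Banach space 'b together with a complex scalar
  multiplication extending the real one and compatible with the norm.\<close>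
definition complex_banach_structure :: "(complex \<Rightarrow> 'b::banach \<Rightarrow> 'b) \<Rightarrow> bool" where
  "complex_banach_structure smul \<longleftrightarrow>
     (\<forall>r y. smul (complex_of_real r) y = r *\<^sub>R y) \<and>
     (\<forall>a b y. smul (a * b) y = smul a (smul b y)) \<and>
     (\<forall>a x y. smul a (x + y) = smul a x + smul a y) \<and>
     (\<forall>a b y. smul (a + b) y = smul a y + smul b y) \<and>
     (\<forall>a y. norm (smul a y) = cmod a * norm y)"

definition isometric_embedding ::
  "(('n::finite \<Rightarrow> complex) \<Rightarrow> real) \<Rightarrow> ('n \<Rightarrow> nat) set \<Rightarrow> (complex \<Rightarrow> 'b::banach \<Rightarrow> 'b)
     \<Rightarrow> ((('n \<Rightarrow> nat) \<Rightarrow> complex) \<Rightarrow> 'b) \<Rightarrow> bool" where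
  "isometric_embedding N J smul I \<longleftrightarrow>
     (\<forall>c\<in>PJ J. \<forall>d\<in>PJ J. I (\<lambda>\<alpha>. c \<alpha> + d \<alpha>) = I c + I d) \<and>
     (\<forall>a. \<forall>c\<in>PJ J. I (\<lambda>\<alpha>. a * c \<alpha>) = smul a (I c)) \<and>
     (\<forall>c\<in>PJ J. norm (I c) = poly_norm N J c)"

definition projections_onto :: "(complex \<Rightarrow> 'b::banach \<Rightarrow> 'b) \<Rightarrow> 'b set \<Rightarrow> ('b \<Rightarrow> 'b) set" where
  "projections_onto smul V =
     {P. (\<forall>x y. P (x + y) = P x + P y) \<and>
         (\<forall>a y. P (smul a y) = smul a (P y)) \<and>
         (\<exists>K. \<forall>y. norm (P y) \<le> K * norm y) \<and>
         (\<forall>y. P y \<in> V) \<and> (\<forall>v\<in>V. P v = v)}"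

definition rel_proj_const :: "(complex \<Rightarrow> 'b::banach \<Rightarrow> 'b) \<Rightarrow> 'b set \<Rightarrow> real" where
  "rel_proj_const smul V = Inf (onorm ` projections_onto smul V)"

end

theory Submission
  imports Defs
begin

text \<open>Averaging a polynomial P over the rotations z \<mapsto> (\<omega> ^ j k * z k) by roots of unity,
  which preserve the unit ball of a lattice norm, isolates one monomial and gives the Cauchy
  estimate |c \<alpha>| |z^\<alpha>| \<le> \<parallel>P\<parallel>: the coefficient functional P \<mapsto> c \<alpha> has norm at most cX N \<alpha>.
  By Hahn--Banach it extends to a functional \<psi> \<alpha> on Y of the same norm, and
  Q y = (\<Sum>\<alpha>\<in>J. \<psi> \<alpha> y * z^\<alpha>) is a projection onto P_J(X_n) with
  |(Q y)(z)| \<le> (\<Sum>\<alpha>\<in>J. cX N \<alpha> * |z^\<alpha>|) \<parallel>y\<parallel> \<le> lambda_hat N J * \<parallel>y\<parallel>.\<close>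

section \<open>Hahn--Banach extension of dominated functionals\<close>

definition sublinear :: "('a::real_vector \<Rightarrow> real) \<Rightarrow> bool" where
  "sublinear p \<longleftrightarrow> (\<forall>x y. p (x + y) \<le> p x + p y) \<and> (\<forall>r x. 0 < r \<longrightarrow> p (r *\<^sub>R x) = r * p x)"

lemma sublinearD:
  assumes "sublinear p"
  shows "p (x + y) \<le> p x + p y" and "0 < r \<Longrightarrow> p (r *\<^sub>R x) = r * p x"
  using assms unfolding sublinear_def by blast+

lemma sublinear_zero: "sublinear p \<Longrightarrow> p 0 = 0"
  using sublinearD(2)[of p 2 0] by simp

lemma sublinear_scaled_norm: "0 \<le> C \<Longrightarrow> sublinear (\<lambda>x. C * norm x)"
  unfolding sublinear_def
  by (auto simp: distrib_left[symmetric] intro: mult_left_mono norm_triangle_ineq)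

text \<open>A subspace of 'a \<times> real dominated by p encodes a linear functional bounded by p on a
  subspace of 'a, through its graph.\<close>
definition dominated_subspace :: "('a::real_vector \<Rightarrow> real) \<Rightarrow> ('a \<times> real) set \<Rightarrow> bool" where
  "dominated_subspace p G \<longleftrightarrow> subspace G \<and> (\<forall>(x, a)\<in>G. a \<le> p x)"

lemma dominated_subspace_functional:
  assumes "sublinear p" "dominated_subspace p G" "(x, a) \<in> G" "(x, b) \<in> G"
  shows "a = b"
proof -
  have "(0, a - b) \<in> G" "(0, b - a) \<in> G"
    using assms(2-4) subspace_diff[of G] unfolding dominated_subspace_def by fastforce+
  hence "a - b \<le> 0" "b - a \<le> 0"
    using assms(2) sublinear_zero[OF assms(1)] unfolding dominated_subspace_def by fastforce+
  thus ?thesis by simp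
qed

lemma dominated_subspace_Union_chain:
  assumes "C \<in> chains {G. dominated_subspace p G}" "C \<noteq> {}"
  shows "dominated_subspace p (\<Union>C)"
proof -
  have dom: "dominated_subspace p G" if "G \<in> C" for G
    using that chainsD2[OF assms(1)] by blast
  have "u + v \<in> \<Union>C" if uv: "u \<in> \<Union>C" "v \<in> \<Union>C" for u v
  proof -
    obtain G H where GH: "G \<in> C" "H \<in> C" "u \<in> G" "v \<in> H" using uv by blast
    then obtain K where "K \<in> C" "u \<in> K" "v \<in> K" using chainsD[OF assms(1) GH(1,2)] by blast
    hence "u + v \<in> K" using dom unfolding dominated_subspace_def by (blast intro: subspace_add)
    thus ?thesis using \<open>K \<in> C\<close> by blast
  qed
  moreover have "0 \<in> \<Union>C"
    using assms(2) dom unfolding dominated_subspace_def by (blast intro: subspace_0)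
  moreover have "r *\<^sub>R u \<in> \<Union>C" if "u \<in> \<Union>C" for r u
    using that dom unfolding dominated_subspace_def by (blast intro: subspace_scale)
  moreover have "\<forall>(x, a)\<in>\<Union>C. a \<le> p x"
    using dom unfolding dominated_subspace_def by blast
  ultimately show ?thesis
    unfolding dominated_subspace_def by (simp add: subspace_def)
qed

text \<open>Subadditivity gives a - p (x - y) \<le> p (x' + y) - b for all (x, a), (x', b) in G;
  any c between the two sides is a value for the new direction y.\<close>
lemma dominated_subspace_extension_value:
  assumes p: "sublinear p" and G: "dominated_subspace p G"
  shows "\<exists>c. \<forall>(x, a)\<in>G. \<forall>t. a + t * c \<le> p (x + t *\<^sub>R y)"
proof -
  have sub: "subspace G" and dom: "\<And>x a. (x, a) \<in> G \<Longrightarrow> a \<le> p x"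
    using G unfolding dominated_subspace_def by auto
  have scale: "(r *\<^sub>R x, r * a) \<in> G" if "(x, a) \<in> G" for r x a
    using subspace_scale[OF sub that, of r] by simp
  have sep: "a - p (x - y) \<le> p (x' + y) - b" if "(x, a) \<in> G" "(x', b) \<in> G" for x a x' b
  proof -
    have "a + b \<le> p (x + x')" using dom subspace_add[OF sub that] by simp
    also have "\<dots> \<le> p (x - y) + p (x' + y)"
      using sublinearD(1)[OF p, of "x - y" "x' + y"] by simp
    finally show ?thesis by simp
  qed
  define L where "L = (\<lambda>(x, a). a - p (x - y)) ` G"
  define c where "c = Sup L"
  have "(0, 0) \<in> G" using subspace_0[OF sub] by (simp add: zero_prod_def)
  hence "L \<noteq> {}" "bdd_above L"
    using sep unfolding L_def bdd_above_def by fastforce+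
  hence lower: "a - p (x - y) \<le> c" and upper: "c \<le> p (x + y) - a" if "(x, a) \<in> G" for x a
    using that sep unfolding c_def L_def by (fastforce intro: cSup_upper cSup_least)+
  have "a + t * c \<le> p (x + t *\<^sub>R y)" if xa: "(x, a) \<in> G" for x a t
  proof (cases t "0 :: real" rule: linorder_cases)
    case less
    define s where "s = - t"
    have s: "0 < s" "t = - s" using less by (auto simp: s_def)
    have "inverse s * a - p (x /\<^sub>R s - y) \<le> c"
      using lower[OF scale[OF xa]] .
    moreover have "p (x + t *\<^sub>R y) = s * p (x /\<^sub>R s - y)"
      using sublinearD(2)[OF p s(1), of "x /\<^sub>R s - y"] s by (simp add: algebra_simps)
    ultimately show ?thesis using s by (simp add: field_simps)
  next
    case equal
    thus ?thesis using dom[OF xa] by simp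
  next
    case greater
    have "c \<le> p (x /\<^sub>R t + y) - inverse t * a"
      using upper[OF scale[OF xa]] .
    moreover have "p (x + t *\<^sub>R y) = t * p (x /\<^sub>R t + y)"
      using sublinearD(2)[OF p greater, of "x /\<^sub>R t + y"] greater by (simp add: algebra_simps)
    ultimately show ?thesis using greater by (simp add: field_simps)
  qed
  thus ?thesis by blast
qed

lemma dominated_subspace_extend:
  assumes p: "sublinear p" and G: "dominated_subspace p G"
  obtains c where "dominated_subspace p (span (insert (y, c) G))"
proof -
  obtain c where c: "\<And>x a t. (x, a) \<in> G \<Longrightarrow> a + t * c \<le> p (x + t *\<^sub>R y)"
    using dominated_subspace_extension_value[OF p G, of y] by blast
  have "span G = G" using G unfolding dominated_subspace_def by simp
  have "a \<le> p x" if xa: "(x, a) \<in> span (insert (y, c) G)" for x a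
  proof -
    obtain t where "(x, a) - t *\<^sub>R (y, c) \<in> span G"
      using xa span_breakdown_eq by blast
    hence "(x - t *\<^sub>R y, a - t * c) \<in> G" using \<open>span G = G\<close> by simp
    from c[OF this, of t] show ?thesis by simp
  qed
  hence "dominated_subspace p (span (insert (y, c) G))"
    unfolding dominated_subspace_def by auto
  thus thesis by (rule that)
qed

lemma dominated_subspace_maximal_extension:
  assumes p: "sublinear p" and G: "dominated_subspace p G"
  obtains M where "dominated_subspace p M" "G \<subseteq> M" "\<And>x. \<exists>a. (x, a) \<in> M"
proof -
  define S where "S = {H. dominated_subspace p H \<and> G \<subseteq> H}"
  have "\<exists>U\<in>S. \<forall>X\<in>C. X \<subseteq> U" if C: "C \<in> chains S" for C
  proof (cases "C = {}")
    case True
    thus ?thesis using G unfolding S_def by blast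
  next
    case False
    have "C \<in> chains {H. dominated_subspace p H}"
      using C unfolding S_def chains_def chain_subset_def by blast
    hence "dominated_subspace p (\<Union>C)"
      using False by (rule dominated_subspace_Union_chain)
    moreover have "G \<subseteq> \<Union>C" using False C unfolding S_def chains_def by blast
    ultimately show ?thesis unfolding S_def by blast
  qed
  from Zorn_Lemma2[OF ballI[OF this]] obtain M
    where "M \<in> S" and maximal: "\<And>X. X \<in> S \<Longrightarrow> M \<subseteq> X \<Longrightarrow> X = M"
    by blast
  hence M: "dominated_subspace p M" and GM: "G \<subseteq> M" unfolding S_def by auto
  have "\<exists>a. (x, a) \<in> M" for x
  proof (rule ccontr)
    assume not_in: "\<nexists>a. (x, a) \<in> M"
    obtain c where ext: "dominated_subspace p (span (insert (x, c) M))"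
      using dominated_subspace_extend[OF p M] by blast
    have "M \<subseteq> span (insert (x, c) M)" by (meson span_superset subset_insertI subset_trans)
    hence "span (insert (x, c) M) = M" using ext GM maximal unfolding S_def by blast
    thus False using not_in span_superset[of "insert (x, c) M"] by blast
  qed
  with M GM show thesis by (rule that)
qed

theorem hahn_banach:
  fixes p :: "'a::real_vector \<Rightarrow> real"
  assumes p: "sublinear p" and G: "dominated_subspace p G"
  shows "\<exists>F. linear F \<and> (\<forall>x. F x \<le> p x) \<and> (\<forall>(x, a)\<in>G. F x = a)"
proof -
  obtain M where M: "dominated_subspace p M" and GM: "G \<subseteq> M" and total: "\<And>x. \<exists>a. (x, a) \<in> M"
    using dominated_subspace_maximal_extension[OF p G] by blast
  define F where "F x = (SOME a. (x, a) \<in> M)" for x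
  have graph: "(x, F x) \<in> M" for x unfolding F_def using total by (rule someI_ex)
  have F_eq: "F x = a" if "(x, a) \<in> M" for x a
    using dominated_subspace_functional[OF p M graph that] .
  have sub: "subspace M" using M unfolding dominated_subspace_def by blast
  have "linear F"
  proof (rule linearI)
    show "F (x + y) = F x + F y" for x y
      using F_eq subspace_add[OF sub graph graph] by simp
    show "F (r *\<^sub>R x) = r *\<^sub>R F x" for r x
      using F_eq subspace_scale[OF sub graph, of r] by simp
  qed
  moreover have "F x \<le> p x" for x
    using M graph unfolding dominated_subspace_def by fast
  moreover have "\<forall>(x, a)\<in>G. F x = a" using F_eq GM by blast
  ultimately show ?thesis by blast
qed

section \<open>Cauchy estimates on the unit ball of a lattice norm\<close>

lemma sum_powers_root_of_unity_ratio:
  fixes a b M :: nat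
  defines "\<omega> \<equiv> cis (2 * pi / real M)"
  assumes "a < M" "b < M"
  shows "(\<Sum>t<M. (\<omega> ^ b * cnj \<omega> ^ a) ^ t) = (if a = b then of_nat M else 0)"
proof -
  have M: "0 < M" using assms by simp
  have root: "\<omega> ^ k = cis (2 * pi * real k / real M)" for k
    unfolding \<omega>_def by (simp add: Complex.DeMoivre field_simps)
  have "cnj \<omega> * \<omega> = 1"
    using complex_norm_square[of \<omega>] by (simp add: \<omega>_def mult.commute)
  hence unit: "cnj \<omega> ^ k * \<omega> ^ k = 1" for k
    by (metis power_mult_distrib power_one)
  define q where "q = \<omega> ^ b * cnj \<omega> ^ a"
  have "\<omega> ^ M = 1" using M by (simp add: root)
  hence "q ^ M = 1"
    unfolding q_def
    by (simp add: power_mult_distrib flip: power_mult complex_cnj_power)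
      (simp add: power_mult mult.commute)
  show ?thesis
  proof (cases "a = b")
    case True
    thus ?thesis using unit[of a] by (simp add: mult.commute)
  next
    case False
    have "q \<noteq> 1"
    proof
      assume "q = 1"
      hence "\<omega> ^ b = \<omega> ^ a"
        using unit[of a] unfolding q_def by (metis mult.assoc mult.commute mult_1)
      hence "b = a"
        using inj_onD[OF bij_betw_imp_inj_on[OF Complex.bij_betw_roots_unity[OF M]]] assms(2,3)
        by (simp add: root)
      with False show False by simp
    qed
    hence "(\<Sum>t<M. q ^ t) = 0" using \<open>q ^ M = 1\<close> by (simp add: geometric_sum)
    thus ?thesis using False unfolding q_def by simp
  qed
qed

lemma mono_pow_mult: "mono_pow (\<lambda>k. u k * v k) \<alpha> = mono_pow u \<alpha> * mono_pow v \<alpha>"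
  unfolding mono_pow_def by (simp add: power_mult_distrib prod.distrib)

lemma norm_mono_pow: "cmod (mono_pow z \<alpha>) = (\<Prod>k\<in>UNIV. cmod (z k) ^ \<alpha> k)"
  unfolding mono_pow_def by (simp add: norm_power flip: prod_norm)

lemma norm_mono_pow_le:
  assumes "\<And>k. cmod (z k) \<le> R"
  shows "cmod (mono_pow z \<alpha>) \<le> (\<Prod>k\<in>UNIV. R ^ \<alpha> k)"
proof -
  have "cmod (mono_pow z \<alpha>) = (\<Prod>k\<in>UNIV. cmod (z k) ^ \<alpha> k)"
    by (rule norm_mono_pow)
  also have "\<dots> \<le> (\<Prod>k\<in>UNIV. R ^ \<alpha> k)"
    by (intro prod_mono conjI power_mono assms) simp_all
  finally show ?thesis .
qed

text \<open>Since all exponents are below M, the M-th roots of unity separate the monomials of J,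
  and only the term c \<alpha> z^\<alpha> survives the average.\<close>
lemma average_over_rotations:
  fixes z :: "'n::finite \<Rightarrow> complex" and M :: nat
  defines "\<omega> \<equiv> cis (2 * pi / real M)"
  assumes J: "finite J" "\<alpha> \<in> J" and deg: "\<forall>\<beta>\<in>J. \<forall>k. \<beta> k < M"
  shows "(\<Sum>j\<in>Pi\<^sub>E UNIV (\<lambda>_. {..<M}).
            (\<Sum>\<beta>\<in>J. c \<beta> * mono_pow (\<lambda>k. \<omega> ^ j k * z k) \<beta>) * cnj (mono_pow (\<lambda>k. \<omega> ^ j k) \<alpha>))
         = of_nat M ^ CARD('n) * (c \<alpha> * mono_pow z \<alpha>)"
proof -
  define T where "T = Pi\<^sub>E (UNIV :: 'n set) (\<lambda>_. {..<M})"
  have orth: "(\<Sum>j\<in>T. mono_pow (\<lambda>k. \<omega> ^ j k) \<beta> * cnj (mono_pow (\<lambda>k. \<omega> ^ j k) \<alpha>))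
      = (if \<beta> = \<alpha> then of_nat M ^ CARD('n) else 0)" if "\<beta> \<in> J" for \<beta>
  proof -
    have "(\<Sum>j\<in>T. mono_pow (\<lambda>k. \<omega> ^ j k) \<beta> * cnj (mono_pow (\<lambda>k. \<omega> ^ j k) \<alpha>))
        = (\<Sum>j\<in>T. \<Prod>k\<in>UNIV. (\<omega> ^ \<beta> k * cnj \<omega> ^ \<alpha> k) ^ j k)"
      unfolding mono_pow_def
      by (simp add: cnj_prod prod.distrib[symmetric] power_mult_distrib
          flip: power_mult complex_cnj_power) (simp add: power_mult mult.commute)
    also have "\<dots> = (\<Prod>k\<in>UNIV. \<Sum>t<M. (\<omega> ^ \<beta> k * cnj \<omega> ^ \<alpha> k) ^ t)"
      unfolding T_def by (rule prod_sum_PiE[symmetric]) auto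
    also have "\<dots> = (\<Prod>k\<in>UNIV. if \<alpha> k = \<beta> k then of_nat M else 0)"
      unfolding \<omega>_def using deg J(2) \<open>\<beta> \<in> J\<close>
      by (intro prod.cong refl sum_powers_root_of_unity_ratio) auto
    also have "\<dots> = (if \<beta> = \<alpha> then of_nat M ^ CARD('n) else 0)"
      by (auto simp: fun_eq_iff)
    finally show ?thesis .
  qed
  have "(\<Sum>j\<in>T. (\<Sum>\<beta>\<in>J. c \<beta> * mono_pow (\<lambda>k. \<omega> ^ j k * z k) \<beta>) * cnj (mono_pow (\<lambda>k. \<omega> ^ j k) \<alpha>))
      = (\<Sum>\<beta>\<in>J. c \<beta> * mono_pow z \<beta> *
           (\<Sum>j\<in>T. mono_pow (\<lambda>k. \<omega> ^ j k) \<beta> * cnj (mono_pow (\<lambda>k. \<omega> ^ j k) \<alpha>)))"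
    by (simp add: mono_pow_mult sum_distrib_left sum_distrib_right mult_ac sum.swap[of _ T])
  also have "\<dots> = (\<Sum>\<beta>\<in>J. if \<beta> = \<alpha> then c \<alpha> * mono_pow z \<alpha> * of_nat M ^ CARD('n) else 0)"
    by (intro sum.cong refl) (simp add: orth)
  also have "\<dots> = of_nat M ^ CARD('n) * (c \<alpha> * mono_pow z \<alpha>)"
    using J by simp
  finally show ?thesis unfolding T_def .
qed

lemma lattice_normD:
  assumes "is_lattice_norm N"
  shows "N z = 0 \<longleftrightarrow> z = (\<lambda>_. 0)"
    and "N (\<lambda>i. c * z i) = cmod c * N z"
    and "N (\<lambda>i. z i + w i) \<le> N z + N w"
    and "(\<And>k. cmod (z k) \<le> cmod (w k)) \<Longrightarrow> N z \<le> N w"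
  using assms unfolding is_lattice_norm_def by blast+

lemma lattice_norm_nonneg:
  assumes N: "is_lattice_norm N"
  shows "0 \<le> N z"
proof -
  have "0 = N (\<lambda>i. z i + (-1) * z i)" using lattice_normD(1)[OF N] by simp
  also have "\<dots> \<le> N z + N (\<lambda>i. (-1) * z i)" by (rule lattice_normD(3)[OF N])
  also have "\<dots> = 2 * N z" using lattice_normD(2)[OF N, of "-1" z] by simp
  finally show ?thesis by simp
qed

lemma zero_in_unit_ball: "is_lattice_norm N \<Longrightarrow> (\<lambda>_. 0) \<in> unit_ball N"
  using lattice_normD(1)[of N "\<lambda>_. 0"] unfolding unit_ball_def by simp

lemma unit_ball_rotate:
  assumes N: "is_lattice_norm N" and z: "z \<in> unit_ball N" and u: "\<And>k. cmod (u k) = 1"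
  shows "(\<lambda>k. u k * z k) \<in> unit_ball N"
  using lattice_normD(4)[OF N, of "\<lambda>k. u k * z k" z] z u by (simp add: unit_ball_def norm_mult)

lemma unit_ball_coordinate_bound:
  fixes N :: "('n::finite \<Rightarrow> complex) \<Rightarrow> real"
  assumes N: "is_lattice_norm N"
  obtains R where "\<And>z k. z \<in> unit_ball N \<Longrightarrow> cmod (z k) \<le> R"
proof -
  define e where "e k = (\<lambda>i. if i = k then 1 else 0 :: complex)" for k :: 'n
  have e_pos: "0 < N (e k)" for k
  proof -
    have "e k \<noteq> (\<lambda>_. 0)" unfolding e_def by (metis zero_neq_one)
    thus ?thesis using lattice_normD(1)[OF N, of "e k"] lattice_norm_nonneg[OF N, of "e k"] by simp
  qed
  have "cmod (z k) \<le> (\<Sum>l\<in>UNIV. 1 / N (e l))" if "z \<in> unit_ball N" for z k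
  proof -
    have "cmod (z k) * N (e k) = N (\<lambda>i. z k * e k i)" using lattice_normD(2)[OF N] by simp
    also have "\<dots> \<le> N z" by (rule lattice_normD(4)[OF N]) (simp add: e_def)
    also have "\<dots> < 1" using that by (simp add: unit_ball_def)
    finally have "cmod (z k) \<le> 1 / N (e k)" using e_pos[of k] by (simp add: field_simps)
    also have "\<dots> \<le> (\<Sum>l\<in>UNIV. 1 / N (e l))"
      by (rule member_le_sum) (simp_all add: e_pos less_imp_le)
    finally show ?thesis .
  qed
  thus thesis by (rule that)
qed

lemma bdd_above_unit_ball_weighted_monomials:
  assumes N: "is_lattice_norm N" and "\<And>\<alpha>. 0 \<le> b \<alpha>"
  shows "bdd_above ((\<lambda>z. \<Sum>\<alpha>\<in>J. b \<alpha> * cmod (mono_pow z \<alpha>)) ` unit_ball N)"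
proof -
  obtain R where "\<And>z k. z \<in> unit_ball N \<Longrightarrow> cmod (z k) \<le> R"
    using unit_ball_coordinate_bound[OF N] by blast
  hence "(\<Sum>\<alpha>\<in>J. b \<alpha> * cmod (mono_pow z \<alpha>)) \<le> (\<Sum>\<alpha>\<in>J. b \<alpha> * (\<Prod>k\<in>UNIV. R ^ \<alpha> k))"
    if "z \<in> unit_ball N" for z
    using that assms(2) by (intro sum_mono mult_left_mono norm_mono_pow_le) auto
  thus ?thesis by (intro bdd_aboveI2) blast
qed

lemma norm_poly_le_weighted_monomials:
  "cmod (\<Sum>\<alpha>\<in>J. c \<alpha> * mono_pow z \<alpha>) \<le> (\<Sum>\<alpha>\<in>J. cmod (c \<alpha>) * cmod (mono_pow z \<alpha>))"
  by (metis (no_types, lifting) norm_mult norm_sum sum.cong)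

lemma norm_poly_le_poly_norm:
  assumes N: "is_lattice_norm N" and z: "z \<in> unit_ball N"
  shows "cmod (\<Sum>\<alpha>\<in>J. c \<alpha> * mono_pow z \<alpha>) \<le> poly_norm N J c"
proof -
  obtain B where B: "\<And>z. z \<in> unit_ball N \<Longrightarrow> (\<Sum>\<alpha>\<in>J. cmod (c \<alpha>) * cmod (mono_pow z \<alpha>)) \<le> B"
    using bdd_above_unit_ball_weighted_monomials[OF N, of "\<lambda>\<alpha>. cmod (c \<alpha>)" J]
    by (auto simp: bdd_above_def)
  have "bdd_above ((\<lambda>z. cmod (\<Sum>\<alpha>\<in>J. c \<alpha> * mono_pow z \<alpha>)) ` unit_ball N)"
    using order_trans[OF norm_poly_le_weighted_monomials B] by (intro bdd_aboveI2) blast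
  thus ?thesis unfolding poly_norm_def by (rule cSUP_upper[OF z])
qed

lemma poly_norm_nonneg: "is_lattice_norm N \<Longrightarrow> 0 \<le> poly_norm N J c"
  using norm_poly_le_poly_norm[OF _ zero_in_unit_ball] by (meson norm_ge_zero order_trans)

lemma norm_coeff_mono_pow_le_poly_norm:
  fixes N :: "('n::finite \<Rightarrow> complex) \<Rightarrow> real"
  assumes N: "is_lattice_norm N" and J: "finite J" "\<alpha> \<in> J" and z: "z \<in> unit_ball N"
  shows "cmod (c \<alpha>) * cmod (mono_pow z \<alpha>) \<le> poly_norm N J c"
proof -
  define M where "M = Suc (Max ((\<lambda>(\<beta>, k). \<beta> k) ` (J \<times> UNIV)))"
  have deg: "\<forall>\<beta>\<in>J. \<forall>k. \<beta> k < M"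
  proof (intro ballI allI)
    fix \<beta> k assume "\<beta> \<in> J"
    have "(\<lambda>(\<beta>, k). \<beta> k) (\<beta>, k) \<le> Max ((\<lambda>(\<beta>, k). \<beta> k) ` (J \<times> UNIV))"
      using \<open>\<beta> \<in> J\<close> J(1) by (intro Max_ge finite_imageI) auto
    thus "\<beta> k < M" unfolding M_def by simp
  qed
  define \<omega> where "\<omega> = cis (2 * pi / real M)"
  define T where "T = Pi\<^sub>E (UNIV :: 'n set) (\<lambda>_. {..<M})"
  define p where "p v = (\<Sum>\<beta>\<in>J. c \<beta> * mono_pow v \<beta>)" for v
  have unimodular: "cmod (mono_pow (\<lambda>k. \<omega> ^ j k) \<alpha>) = 1" for j
    by (simp add: norm_mono_pow norm_power \<omega>_def)
  have "real M ^ CARD('n) * (cmod (c \<alpha>) * cmod (mono_pow z \<alpha>))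
      = cmod (\<Sum>j\<in>T. p (\<lambda>k. \<omega> ^ j k * z k) * cnj (mono_pow (\<lambda>k. \<omega> ^ j k) \<alpha>))"
    using average_over_rotations[OF J deg, of c z] unfolding p_def T_def \<omega>_def
    by (simp add: norm_mult norm_power)
  also have "\<dots> \<le> (\<Sum>j\<in>T. cmod (p (\<lambda>k. \<omega> ^ j k * z k)))"
    using norm_sum[of "\<lambda>j. p (\<lambda>k. \<omega> ^ j k * z k) * cnj (mono_pow (\<lambda>k. \<omega> ^ j k) \<alpha>)" T]
    by (simp add: norm_mult unimodular)
  also have "\<dots> \<le> (\<Sum>j\<in>T. poly_norm N J c)"
    unfolding p_def \<omega>_def
    by (intro sum_mono norm_poly_le_poly_norm[OF N] unit_ball_rotate[OF N z]) (simp add: norm_power)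
  also have "\<dots> = real M ^ CARD('n) * poly_norm N J c"
    by (simp add: T_def card_PiE)
  finally show ?thesis
    using deg J(2) by (simp add: mult_le_cancel_left_pos M_def)
qed

lemma sup_norm_mono_pow_pos:
  assumes N: "is_lattice_norm N"
  shows "0 < (SUP z\<in>unit_ball N. cmod (mono_pow z \<alpha>))"
proof -
  define r where "r = 1 / (N (\<lambda>_. 1) + 1)"
  have r: "0 < r" "r * N (\<lambda>_. 1) < 1"
    using lattice_norm_nonneg[OF N, of "\<lambda>_. 1"] unfolding r_def by (auto simp: field_simps)
  have "N (\<lambda>_. complex_of_real r) = r * N (\<lambda>_. 1)"
    using lattice_normD(2)[OF N, of "complex_of_real r" "\<lambda>_. 1"] r by simp
  hence z: "(\<lambda>_. complex_of_real r) \<in> unit_ball N" using r unfolding unit_ball_def by simp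
  have "0 < cmod (mono_pow (\<lambda>_. complex_of_real r) \<alpha>)"
    using r by (simp add: mono_pow_def)
  also have "\<dots> \<le> (SUP z\<in>unit_ball N. cmod (mono_pow z \<alpha>))"
    using bdd_above_unit_ball_weighted_monomials[OF N, of "\<lambda>_. 1" "{\<alpha>}"]
    by (intro cSUP_upper[OF z]) simp
  finally show ?thesis .
qed

lemma cX_pos: "is_lattice_norm N \<Longrightarrow> 0 < cX N \<alpha>"
  unfolding cX_def using sup_norm_mono_pow_pos by simp

lemma norm_coeff_le_cX_poly_norm:
  assumes N: "is_lattice_norm N" and J: "finite J" "\<alpha> \<in> J"
  shows "cmod (c \<alpha>) \<le> cX N \<alpha> * poly_norm N J c"
proof (cases "c \<alpha> = 0")
  case True
  thus ?thesis using poly_norm_nonneg[OF N] cX_pos[OF N] by (simp add: less_imp_le)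
next
  case False
  define S where "S = (SUP z\<in>unit_ball N. cmod (mono_pow z \<alpha>))"
  have "S \<le> poly_norm N J c / cmod (c \<alpha>)"
    unfolding S_def using zero_in_unit_ball[OF N]
  proof (intro cSUP_least)
    fix z assume "z \<in> unit_ball N"
    with norm_coeff_mono_pow_le_poly_norm[OF N J this, of c] False
    show "cmod (mono_pow z \<alpha>) \<le> poly_norm N J c / cmod (c \<alpha>)" by (simp add: field_simps)
  qed blast
  thus ?thesis
    using False sup_norm_mono_pow_pos[OF N, of \<alpha>] unfolding cX_def S_def[symmetric]
    by (simp add: field_simps)
qed

section \<open>Complex-linear extension\<close>

lemma complex_banach_structureD:
  assumes "complex_banach_structure smul"
  shows "smul (complex_of_real r) y = r *\<^sub>R y"
    and "smul (a * b) y = smul a (smul b y)"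
    and "smul a (x + y) = smul a x + smul a y"
    and "smul (a + b) y = smul a y + smul b y"
    and "norm (smul a y) = cmod a * norm y"
  using assms unfolding complex_banach_structure_def by blast+

lemma smul_scaleR_commute:
  assumes S: "complex_banach_structure smul"
  shows "smul a (r *\<^sub>R y) = r *\<^sub>R smul a y"
  using complex_banach_structureD(1,2)[OF S] by (metis mult.commute)

lemma smul_ii_ii:
  assumes S: "complex_banach_structure smul"
  shows "smul \<i> (smul \<i> y) = - y"
  using complex_banach_structureD(2)[OF S, of \<i> \<i> y] complex_banach_structureD(1)[OF S, of "-1" y]
  by simp

definition complex_linear_functional :: "(complex \<Rightarrow> 'b::banach \<Rightarrow> 'b) \<Rightarrow> ('b \<Rightarrow> complex) \<Rightarrow> bool" where
  "complex_linear_functional smul \<psi> \<longleftrightarrow>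
     (\<forall>x y. \<psi> (x + y) = \<psi> x + \<psi> y) \<and> (\<forall>a y. \<psi> (smul a y) = a * \<psi> y)"

text \<open>The unique complex-linear functional with real part F.\<close>
definition complexify :: "(complex \<Rightarrow> 'b::banach \<Rightarrow> 'b) \<Rightarrow> ('b \<Rightarrow> real) \<Rightarrow> 'b \<Rightarrow> complex" where
  "complexify smul F y = complex_of_real (F y) - \<i> * complex_of_real (F (smul \<i> y))"

lemma complexify_linear:
  assumes S: "complex_banach_structure smul" and F: "linear F"
  shows "complex_linear_functional smul (complexify smul F)"
proof -
  note s = complex_banach_structureD[OF S]
  have add: "complexify smul F (x + y) = complexify smul F x + complexify smul F y" for x y
    unfolding complexify_def s(3) linear_add[OF F] by (simp add: algebra_simps)
  have real: "complexify smul F (r *\<^sub>R y) = complex_of_real r * complexify smul F y" for r y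
    unfolding complexify_def smul_scaleR_commute[OF S] linear_scale[OF F] by (simp add: algebra_simps)
  have ii: "complexify smul F (smul \<i> y) = \<i> * complexify smul F y" for y
    unfolding complexify_def smul_ii_ii[OF S] linear_neg[OF F] by (simp add: algebra_simps)
  have "complexify smul F (smul a y) = a * complexify smul F y" for a y
  proof -
    have a: "a = complex_of_real (Re a) + \<i> * complex_of_real (Im a)"
      by (simp add: complex_eq_iff)
    have "smul a y = Re a *\<^sub>R y + Im a *\<^sub>R smul \<i> y"
      by (subst a) (simp add: s(1,2,4) smul_scaleR_commute[OF S])
    hence "complexify smul F (smul a y)
        = (complex_of_real (Re a) + \<i> * complex_of_real (Im a)) * complexify smul F y"
      by (simp add: add real ii algebra_simps)
    thus ?thesis by (simp only: a[symmetric])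
  qed
  thus ?thesis unfolding complex_linear_functional_def using add by blast
qed

lemma norm_complexify_le:
  assumes S: "complex_banach_structure smul" and F: "linear F"
    and bound: "\<And>y. F y \<le> C * norm y"
  shows "cmod (complexify smul F y) \<le> C * norm y"
proof (cases "complexify smul F y = 0")
  case True
  thus ?thesis using bound[of y] bound[of "- y"] linear_neg[OF F] by simp
next
  case False
  define a where "a = cnj (complexify smul F y) / cmod (complexify smul F y)"
  have a: "cmod a = 1" unfolding a_def using False by (simp add: norm_divide)
  have "complex_of_real (cmod (complexify smul F y)) = a * complexify smul F y"
    unfolding a_def using False
    by (simp add: field_simps complex_norm_square[symmetric] power2_eq_square)
  also have "\<dots> = complexify smul F (smul a y)"
    using complexify_linear[OF S F] unfolding complex_linear_functional_def by simp
  finally have "cmod (complexify smul F y) = Re (complexify smul F (smul a y))"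
    by (metis Re_complex_of_real)
  also have "\<dots> = F (smul a y)" by (simp add: complexify_def)
  also have "\<dots> \<le> C * norm y" using bound[of "smul a y"] a complex_banach_structureD(5)[OF S] by simp
  finally show ?thesis .
qed

theorem complex_hahn_banach:
  fixes smul :: "complex \<Rightarrow> 'b::banach \<Rightarrow> 'b" and G :: "('b \<times> complex) set"
  assumes S: "complex_banach_structure smul" and C: "0 \<le> C"
    and zero: "(0, 0) \<in> G"
    and add: "\<And>x z y w. (x, z) \<in> G \<Longrightarrow> (y, w) \<in> G \<Longrightarrow> (x + y, z + w) \<in> G"
    and smul: "\<And>a x z. (x, z) \<in> G \<Longrightarrow> (smul a x, a * z) \<in> G"
    and bound: "\<And>x z. (x, z) \<in> G \<Longrightarrow> cmod z \<le> C * norm x"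
  shows "\<exists>\<psi>. complex_linear_functional smul \<psi> \<and> (\<forall>y. cmod (\<psi> y) \<le> C * norm y) \<and>
             (\<forall>(x, z)\<in>G. \<psi> x = z)"
proof -
  define GR where "GR = (\<lambda>(x, z). (x, Re z)) ` G"
  have "subspace GR"
  proof (rule subspaceI)
    show "0 \<in> GR" using zero unfolding GR_def zero_prod_def by force
    show "u + v \<in> GR" if "u \<in> GR" "v \<in> GR" for u v
    proof -
      obtain x z y w where "(x, z) \<in> G" "(y, w) \<in> G" "u = (x, Re z)" "v = (y, Re w)"
        using \<open>u \<in> GR\<close> \<open>v \<in> GR\<close> unfolding GR_def by auto
      thus ?thesis using add unfolding GR_def by (auto intro!: image_eqI[where x = "(x + y, z + w)"])
    qed
    show "r *\<^sub>R u \<in> GR" if "u \<in> GR" for r u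
    proof -
      obtain x z where "(x, z) \<in> G" "u = (x, Re z)" using \<open>u \<in> GR\<close> unfolding GR_def by auto
      thus ?thesis using smul complex_banach_structureD(1)[OF S] unfolding GR_def
        by (auto intro!: image_eqI[where x = "(smul (complex_of_real r) x, complex_of_real r * z)"])
    qed
  qed
  moreover have "\<forall>(x, a)\<in>GR. a \<le> C * norm x"
    using bound complex_Re_le_cmod order_trans unfolding GR_def by fastforce
  ultimately obtain F where F: "linear F" "\<And>y. F y \<le> C * norm y" and FG: "\<forall>(x, a)\<in>GR. F x = a"
    using hahn_banach[OF sublinear_scaled_norm[OF C]] unfolding dominated_subspace_def by blast
  have "complexify smul F x = z" if "(x, z) \<in> G" for x z
  proof -
    have "F x = Re z" "F (smul \<i> x) = Re (\<i> * z)"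
      using FG that smul[OF that, of \<i>] unfolding GR_def by force+
    thus ?thesis unfolding complexify_def by (simp add: complex_eq_iff)
  qed
  thus ?thesis using complexify_linear[OF S F(1)] norm_complexify_le[OF S F] by blast
qed

section \<open>The projection onto P_J(X_n)\<close>

lemma lambda_hat_nonneg:
  assumes N: "is_lattice_norm N"
  shows "0 \<le> lambda_hat N J"
proof -
  have "0 \<le> (\<Sum>\<alpha>\<in>J. cX N \<alpha> * cmod (mono_pow (\<lambda>_. 0) \<alpha>))"
    using cX_pos[OF N] by (intro sum_nonneg mult_nonneg_nonneg) (auto intro: less_imp_le)
  also have "\<dots> \<le> lambda_hat N J"
    unfolding lambda_hat_def using cX_pos[OF N]
    by (intro cSUP_upper zero_in_unit_ball[OF N] bdd_above_unit_ball_weighted_monomials[OF N])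
      (auto intro: less_imp_le)
  finally show ?thesis .
qed

lemma poly_norm_le_lambda_hat:
  assumes N: "is_lattice_norm N" and r: "0 \<le> r"
    and coeff: "\<And>\<alpha>. \<alpha> \<in> J \<Longrightarrow> cmod (c \<alpha>) \<le> cX N \<alpha> * r"
  shows "poly_norm N J c \<le> lambda_hat N J * r"
  unfolding poly_norm_def
proof (rule cSUP_least)
  show "unit_ball N \<noteq> {}" using zero_in_unit_ball[OF N] by blast
next
  fix z assume z: "z \<in> unit_ball N"
  have "cmod (\<Sum>\<alpha>\<in>J. c \<alpha> * mono_pow z \<alpha>) \<le> (\<Sum>\<alpha>\<in>J. cmod (c \<alpha>) * cmod (mono_pow z \<alpha>))"
    by (rule norm_poly_le_weighted_monomials)
  also have "\<dots> \<le> (\<Sum>\<alpha>\<in>J. cX N \<alpha> * r * cmod (mono_pow z \<alpha>))"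
    by (intro sum_mono mult_right_mono coeff) simp_all
  also have "\<dots> = r * (\<Sum>\<alpha>\<in>J. cX N \<alpha> * cmod (mono_pow z \<alpha>))"
    by (simp add: sum_distrib_left mult_ac)
  also have "\<dots> \<le> r * lambda_hat N J"
    unfolding lambda_hat_def using cX_pos[OF N]
    by (intro mult_left_mono cSUP_upper[OF z] bdd_above_unit_ball_weighted_monomials[OF N] r)
      (auto intro: less_imp_le)
  finally show "cmod (\<Sum>\<alpha>\<in>J. c \<alpha> * mono_pow z \<alpha>) \<le> lambda_hat N J * r"
    by (simp add: mult.commute)
qed

lemma isometric_embeddingD:
  assumes "isometric_embedding N J smul I"
  shows "c \<in> PJ J \<Longrightarrow> d \<in> PJ J \<Longrightarrow> I (\<lambda>\<beta>. c \<beta> + d \<beta>) = I c + I d"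
    and "c \<in> PJ J \<Longrightarrow> I (\<lambda>\<beta>. a * c \<beta>) = smul a (I c)"
    and "c \<in> PJ J \<Longrightarrow> norm (I c) = poly_norm N J c"
  using assms unfolding isometric_embedding_def by blast+

lemma coefficient_functional_extension:
  fixes N :: "('n::finite \<Rightarrow> complex) \<Rightarrow> real" and smul :: "complex \<Rightarrow> 'b::banach \<Rightarrow> 'b"
  assumes N: "is_lattice_norm N" and J: "finite J" "\<alpha> \<in> J"
    and S: "complex_banach_structure smul" and I: "isometric_embedding N J smul I"
  shows "\<exists>\<psi>. complex_linear_functional smul \<psi> \<and> (\<forall>y. cmod (\<psi> y) \<le> cX N \<alpha> * norm y) \<and>
             (\<forall>c\<in>PJ J. \<psi> (I c) = c \<alpha>)"
proof -
  note I_add = isometric_embeddingD(1)[OF I] and I_smul = isometric_embeddingD(2)[OF I]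
    and I_norm = isometric_embeddingD(3)[OF I]
  have PJ_0: "(\<lambda>_. 0) \<in> PJ J" unfolding PJ_def by simp
  define G where "G = (\<lambda>c. (I c, c \<alpha>)) ` PJ J"
  have "I (\<lambda>_. 0) = 0" using I_add[OF PJ_0 PJ_0] by simp
  hence "(0, 0) \<in> G" unfolding G_def using PJ_0 by force
  moreover have "(x + y, z + w) \<in> G" if xz: "(x, z) \<in> G" and yw: "(y, w) \<in> G" for x z y w
  proof -
    obtain c d where cd: "c \<in> PJ J" "d \<in> PJ J" "(x, z) = (I c, c \<alpha>)" "(y, w) = (I d, d \<alpha>)"
      using xz yw unfolding G_def by blast
    hence "(x + y, z + w) = (\<lambda>c. (I c, c \<alpha>)) (\<lambda>\<beta>. c \<beta> + d \<beta>)" using I_add by simp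
    moreover have "(\<lambda>\<beta>. c \<beta> + d \<beta>) \<in> PJ J" using cd unfolding PJ_def by simp
    ultimately show ?thesis unfolding G_def by (rule rev_image_eqI[rotated])
  qed
  moreover have "(smul a x, a * z) \<in> G" if xz: "(x, z) \<in> G" for a x z
  proof -
    obtain c where c: "c \<in> PJ J" "(x, z) = (I c, c \<alpha>)" using xz unfolding G_def by blast
    hence "(smul a x, a * z) = (\<lambda>c. (I c, c \<alpha>)) (\<lambda>\<beta>. a * c \<beta>)" using I_smul by simp
    moreover have "(\<lambda>\<beta>. a * c \<beta>) \<in> PJ J" using c unfolding PJ_def by simp
    ultimately show ?thesis unfolding G_def by (rule rev_image_eqI[rotated])
  qed
  moreover have "cmod z \<le> cX N \<alpha> * norm x" if "(x, z) \<in> G" for x z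
    using that norm_coeff_le_cX_poly_norm[OF N J] I_norm unfolding G_def by auto
  ultimately show ?thesis
    using complex_hahn_banach[OF S less_imp_le[OF cX_pos[OF N]], of G] unfolding G_def by auto
qed

lemma coefficient_projection:
  fixes N :: "('n::finite \<Rightarrow> complex) \<Rightarrow> real" and smul :: "complex \<Rightarrow> 'b::banach \<Rightarrow> 'b"
  assumes N: "is_lattice_norm N" and I: "isometric_embedding N J smul I"
    and \<psi>: "\<And>\<alpha>. \<alpha> \<in> J \<Longrightarrow> complex_linear_functional smul (\<psi> \<alpha>)"
    and \<psi>_bound: "\<And>\<alpha> y. \<alpha> \<in> J \<Longrightarrow> cmod (\<psi> \<alpha> y) \<le> cX N \<alpha> * norm y"
    and \<psi>_coeff: "\<And>\<alpha> c. \<alpha> \<in> J \<Longrightarrow> c \<in> PJ J \<Longrightarrow> \<psi> \<alpha> (I c) = c \<alpha>"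
  defines "Q \<equiv> \<lambda>y. I (\<lambda>\<beta>. if \<beta> \<in> J then \<psi> \<beta> y else 0)"
  shows "norm (Q y) \<le> lambda_hat N J * norm y"
    and "Q \<in> projections_onto smul (I ` PJ J)"
proof -
  define coeffs where "coeffs y = (\<lambda>\<beta>. if \<beta> \<in> J then \<psi> \<beta> y else 0)" for y
  have coeffs: "coeffs y \<in> PJ J" for y unfolding coeffs_def PJ_def by simp
  note I_add = isometric_embeddingD(1)[OF I] and I_smul = isometric_embeddingD(2)[OF I]
    and I_norm = isometric_embeddingD(3)[OF I]
  have Q_bound: "norm (Q y) \<le> lambda_hat N J * norm y" for y
  proof -
    have "poly_norm N J (coeffs y) \<le> lambda_hat N J * norm y"
      using \<psi>_bound by (intro poly_norm_le_lambda_hat[OF N norm_ge_zero]) (simp add: coeffs_def)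
    thus ?thesis using I_norm[OF coeffs] unfolding Q_def coeffs_def by simp
  qed
  show "norm (Q y) \<le> lambda_hat N J * norm y" by (rule Q_bound)
  have "Q (x + y) = Q x + Q y" for x y
    using I_add[OF coeffs coeffs, of x y] \<psi> unfolding Q_def coeffs_def complex_linear_functional_def
    by (simp add: if_distrib cong: if_cong)
  moreover have "Q (smul a y) = smul a (Q y)" for a y
    using I_smul[OF coeffs, of a y] \<psi> unfolding Q_def coeffs_def complex_linear_functional_def
    by (simp add: if_distrib cong: if_cong)
  moreover have "Q (I c) = I c" if "c \<in> PJ J" for c
  proof -
    have "coeffs (I c) = c" using that \<psi>_coeff unfolding coeffs_def PJ_def by auto
    thus ?thesis unfolding Q_def coeffs_def by simp
  qed
  ultimately show "Q \<in> projections_onto smul (I ` PJ J)"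
    unfolding projections_onto_def using Q_bound coeffs unfolding Q_def coeffs_def by blast
qed

lemma rel_proj_const_le:
  assumes S: "complex_banach_structure smul" and P: "P \<in> projections_onto smul V"
    and K: "0 \<le> K" "\<And>y. norm (P y) \<le> K * norm y"
  shows "rel_proj_const smul V \<le> K"
proof -
  have "bounded_linear Q" if "Q \<in> projections_onto smul V" for Q
  proof -
    from that obtain B where Q: "\<And>x y. Q (x + y) = Q x + Q y"
      "\<And>a y. Q (smul a y) = smul a (Q y)" "\<And>y. norm (Q y) \<le> B * norm y"
      unfolding projections_onto_def by blast
    show ?thesis
    proof (rule bounded_linear_intro)
      show "Q (r *\<^sub>R x) = r *\<^sub>R Q x" for r x
        using Q(2)[of "complex_of_real r"] complex_banach_structureD(1)[OF S] by simp
      show "norm (Q x) \<le> norm x * B" for x using Q(3)[of x] by (simp add: mult.commute)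
    qed (rule Q(1))
  qed
  hence "bdd_below (onorm ` projections_onto smul V)"
    by (intro bdd_belowI2[of _ 0] onorm_pos_le)
  hence "rel_proj_const smul V \<le> onorm P"
    unfolding rel_proj_const_def by (rule cInf_lower[OF imageI[OF P]])
  also have "onorm P \<le> K" by (rule onorm_bound[OF K])
  finally show ?thesis .
qed

theorem theorem2p18:
  fixes N :: "('n::finite \<Rightarrow> complex) \<Rightarrow> real"
    and J :: "('n \<Rightarrow> nat) set"
    and smul :: "complex \<Rightarrow> 'b::banach \<Rightarrow> 'b"
    and I :: "(('n \<Rightarrow> nat) \<Rightarrow> complex) \<Rightarrow> 'b"
  assumes "is_lattice_norm N"
    and "finite J"
    and "complex_banach_structure smul"
    and "isometric_embedding N J smul I"
  shows "rel_proj_const smul (I ` PJ J) \<le> lambda_hat N J"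
proof -
  have "\<forall>\<alpha>\<in>J. \<exists>\<psi>. complex_linear_functional smul \<psi> \<and>
      (\<forall>y. cmod (\<psi> y) \<le> cX N \<alpha> * norm y) \<and> (\<forall>c\<in>PJ J. \<psi> (I c) = c \<alpha>)"
    using coefficient_functional_extension[OF assms(1,2) _ assms(3,4)] by blast
  then obtain \<psi> where \<psi>: "\<forall>\<alpha>\<in>J. complex_linear_functional smul (\<psi> \<alpha>) \<and>
      (\<forall>y. cmod (\<psi> \<alpha> y) \<le> cX N \<alpha> * norm y) \<and> (\<forall>c\<in>PJ J. \<psi> \<alpha> (I c) = c \<alpha>)"
    by (rule bchoice[THEN exE])
  define Q where "Q y = I (\<lambda>\<beta>. if \<beta> \<in> J then \<psi> \<beta> y else 0)" for y
  have "Q \<in> projections_onto smul (I ` PJ J)" and "norm (Q y) \<le> lambda_hat N J * norm y" for y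
    using coefficient_projection[OF assms(1,4), of \<psi>] \<psi> unfolding Q_def by blast+
  thus ?thesis using rel_proj_const_le[OF assms(3)] lambda_hat_nonneg[OF assms(1)] by blast
qed

end
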